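(* Let $G$ be a directed graph in which every vertex is reachable from a vertex $s$, let $t$ be a vertex of $G$, and let $k\ge 1$ be an integer. Assume that for no $\ell\in\{k,\dots,2k-1\}$ does $G$ contain an $(s,t)$-path of length exactly $dist_G(s,t)+\ell$, and that $G$ contains an $(s,t)$-path of length at least $dist_G(s,t)+k$; let $P$ be such a path of minimum length. For $i\ge0$ let $L_i$ be the set of vertices at distance exactly $i$ from $s$. Let $p$ be the smallest integer $i\ge1$ such that $L_i$ contains more than one vertex of $P$, and let $u,v$ be the first and second vertices of $P$ (in order along $P$) lying in $L_p$. Let $x$ be the vertex of $P_{u,v}$ such that $P_{u,x}$ has length exactly $k$ (the path $P_{u,v}$ has more than $k$ edges). Let $k''=\min\{2k+1,|V(P_{v,t})|\}$ and let $z$ be the last vertex of the subpath of $P_{v,t}$ formed by its first $k''$ vertices. Let $P'$ be a path of length at most $k$ from $u$ to $x$ in the induced subgraph $G[\bigcup_{i\ge p}L_i]$. Then every vertex of $P_{v,t}$ that belongs to $P'$ lies on the subpath $P_{v,z}$.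
   Context: Paths are simple directed paths; the length of a path is its number of edges. $dist_G(a,b)$ denotes the length of a shortest directed $(a,b)$-path in $G$. For a path $P$ and vertices $a,b$ on it (with $a$ before $b$), $P_{a,b}$ denotes the subpath of $P$ from $a$ to $b$. *)

theory Defs
  imports Main
begin

definition is_path :: "'a set \<Rightarrow> ('a \<times> 'a) set \<Rightarrow> 'a list \<Rightarrow> bool" where
  "is_path V E xs \<longleftrightarrow> xs \<noteq> [] \<and> distinct xs \<and> set xs \<subseteq> V \<and>
     (\<forall>i. Suc i < length xs \<longrightarrow> (xs ! i, xs ! Suc i) \<in> E)"

definition is_walk_path :: "'a set \<Rightarrow> ('a \<times> 'a) set \<Rightarrow> 'a \<Rightarrow> 'a \<Rightarrow> 'a list \<Rightarrow> bool" where
  "is_walk_path V E a b xs \<longleftrightarrow> is_path V E xs \<and> hd xs = a \<and> last xs = b"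

definition plen :: "'a list \<Rightarrow> nat" where
  "plen xs = length xs - 1"

definition dist :: "'a set \<Rightarrow> ('a \<times> 'a) set \<Rightarrow> 'a \<Rightarrow> 'a \<Rightarrow> nat" where
  "dist V E a b = (LEAST n. \<exists>xs. is_walk_path V E a b xs \<and> plen xs = n)"

definition layer :: "'a set \<Rightarrow> ('a \<times> 'a) set \<Rightarrow> 'a \<Rightarrow> nat \<Rightarrow> 'a set" where
  "layer V E s i = {w \<in> V. dist V E s w = i}"

definition induced_arcs :: "('a \<times> 'a) set \<Rightarrow> 'a set \<Rightarrow> ('a \<times> 'a) set" where
  "induced_arcs E W = E \<inter> (W \<times> W)"

end

theory Submission
  imports Defs
begin

(* Distances from s grow by at most one along an arc, so before reaching a vertex at distance d
   the path P visits every layer below d. As the layers 1, ..., p-1 meet P at most once, every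
   vertex of P after u lies in a layer of index at least p. Hence a shortest (s,v)-path followed
   by P_{v,t} is an (s,t)-path shorter than P, and by the minimality of P its length
   p + |P_{v,t}| is less than dist(s,t) + k. If P' met P_{v,t} beyond z, a shortest (s,u)-path,
   followed by P' up to its first vertex on that tail and then by P, would be an (s,t)-path of
   length at most p + k + |P_{v,t}| - 2k - 1 < dist(s,t).
   Besides the minimality of P and the sparsity of the layers below p, the proof only uses that
   P' starts at u, stays in the layers of index at least p and has length at most k. *)

lemma in_set_drop_beyond_take:
  assumes "w \<in> set (drop n xs)" "w \<notin> set (take m (drop n xs))"
  shows "n + m < length xs" "w \<in> set (drop (n + m) xs)"
proof -
  show "w \<in> set (drop (n + m) xs)"
    using assms by (metis Un_iff append_take_drop_id drop_drop set_append add.commute)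
  then show "n + m < length xs"
    by (metis drop_all empty_iff list.set(1) not_le)
qed

lemma nat_attains_intermediate_value:
  fixes f :: "nat \<Rightarrow> nat"
  assumes "\<forall>i<n. f (Suc i) \<le> f i + 1" "f 0 \<le> d" "d \<le> f n"
  shows "\<exists>i\<le>n. f i = d"
  using assms
proof (induction n)
  case 0
  then show ?case by auto
next
  case (Suc n)
  show ?case
  proof (cases "d \<le> f n")
    case True
    with Suc obtain i where "i \<le> n" "f i = d" by auto
    then show ?thesis by (intro exI[of _ i]) auto
  next
    case False
    with Suc.prems have "f (Suc n) = d" by fastforce
    then show ?thesis by blast
  qed
qed

lemma is_path_singleton [simp]: "is_path V E [x] \<longleftrightarrow> x \<in> V"
  by (simp add: is_path_def)

lemma is_path_Cons_Cons [simp]: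
  "is_path V E (x # y # ys) \<longleftrightarrow>
     x \<in> V \<and> (x, y) \<in> E \<and> x \<notin> set (y # ys) \<and> is_path V E (y # ys)"
  unfolding is_path_def by (auto simp: nth_Cons split: nat.splits)

lemma is_path_glue:
  "is_path V E (xs @ [y]) \<Longrightarrow> is_path V E (y # ys) \<Longrightarrow> set xs \<inter> set (y # ys) = {}
    \<Longrightarrow> is_path V E (xs @ y # ys)"
  by (induction xs rule: induct_list012) auto

lemma is_path_mono: "is_path V E' xs \<Longrightarrow> E' \<subseteq> E \<Longrightarrow> is_path V E xs"
  unfolding is_path_def by blast

lemma is_walk_path_take:
  assumes "is_walk_path V E a b xs" "i < length xs"
  shows "is_walk_path V E a (xs ! i) (take (Suc i) xs)" "plen (take (Suc i) xs) = i"
proof -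
  have "last (take (Suc i) xs) = xs ! i"
    using assms(2) by (simp add: take_Suc_conv_app_nth)
  then show "is_walk_path V E a (xs ! i) (take (Suc i) xs)"
    using assms by (auto simp: is_walk_path_def is_path_def dest: in_set_takeD)
  show "plen (take (Suc i) xs) = i"
    using assms(2) by (simp add: plen_def)
qed

lemma is_walk_path_drop:
  assumes "is_walk_path V E a b xs" "i < length xs"
  shows "is_walk_path V E (xs ! i) b (drop i xs)" "plen (drop i xs) = plen xs - i"
  using assms by (auto simp: is_walk_path_def is_path_def plen_def hd_drop_conv_nth
      dest: in_set_dropD)

lemma is_walk_path_glue:
  assumes xs: "is_walk_path V E a b xs" and ys: "is_walk_path V E b c ys"
    and disjoint: "set (butlast xs) \<inter> set ys = {}"
  shows "is_walk_path V E a c (butlast xs @ ys)" "plen (butlast xs @ ys) = plen xs + plen ys"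
proof -
  have xs_eq: "xs = butlast xs @ [b]" and ys_eq: "ys = b # tl ys"
    using xs ys unfolding is_walk_path_def is_path_def
    by (metis append_butlast_last_id, metis list.collapse)
  have "is_path V E (butlast xs @ b # tl ys)"
    using xs ys disjoint xs_eq ys_eq is_path_glue[of V E "butlast xs" b "tl ys"]
    by (metis is_walk_path_def)
  moreover have "hd (butlast xs @ ys) = a"
    using xs ys xs_eq by (cases "butlast xs") (auto simp: is_walk_path_def)
  moreover have "last (butlast xs @ ys) = c"
    using ys ys_eq by (metis is_walk_path_def last_appendR list.distinct(1))
  ultimately show "is_walk_path V E a c (butlast xs @ ys)"
    using ys_eq by (simp add: is_walk_path_def)
  show "plen (butlast xs @ ys) = plen xs + plen ys"
  proof -
    have "length ys \<ge> 1"
      using ys by (simp add: is_walk_path_def is_path_def Suc_le_eq)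
    then show ?thesis by (simp add: plen_def)
  qed
qed

lemma is_walk_path_through_crossing:
  assumes xs: "is_walk_path V E a c xs" and ys: "is_walk_path V E y t ys"
    and meet: "set xs \<inter> set ys \<noteq> {}"
  shows "\<exists>zs. is_walk_path V E a t zs \<and> plen zs \<le> plen xs + plen ys \<and> set zs \<subseteq> set xs \<union> set ys"
proof -
  have "\<exists>i. i < length xs \<and> xs ! i \<in> set ys"
    using meet by (metis disjoint_iff in_set_conv_nth)
  then obtain b0 where b0: "b0 < length xs" "xs ! b0 \<in> set ys"
    and first: "\<forall>i<b0. \<not> (i < length xs \<and> xs ! i \<in> set ys)"
    unfolding exists_least_iff[of "\<lambda>i. i < length xs \<and> xs ! i \<in> set ys"] by blast
  have before_b0: "set (take b0 xs) \<inter> set ys = {}"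
    using first b0(1) by (auto simp: in_set_conv_nth)
  obtain j where j: "j < length ys" "ys ! j = xs ! b0"
    using b0(2) by (auto simp: in_set_conv_nth)
  have "is_walk_path V E a (xs ! b0) (take (Suc b0) xs)" "plen (take (Suc b0) xs) = b0"
    using is_walk_path_take[OF xs b0(1)] by simp_all
  moreover have "is_walk_path V E (xs ! b0) t (drop j ys)" "plen (drop j ys) = plen ys - j"
    using is_walk_path_drop[OF ys j(1)] j(2) by simp_all
  moreover have "set (butlast (take (Suc b0) xs)) \<inter> set (drop j ys) = {}"
    using before_b0 b0(1) set_drop_subset[of j ys] by (auto simp: butlast_take)
  ultimately have "is_walk_path V E a t (butlast (take (Suc b0) xs) @ drop j ys)"
    "plen (butlast (take (Suc b0) xs) @ drop j ys) = b0 + (plen ys - j)"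
    using is_walk_path_glue by metis+
  moreover have "b0 \<le> plen xs"
    using b0(1) by (simp add: plen_def)
  moreover have "set (butlast (take (Suc b0) xs) @ drop j ys) \<subseteq> set xs \<union> set ys"
    by (auto dest: in_set_butlastD in_set_takeD in_set_dropD)
  ultimately show ?thesis by (intro exI) auto
qed

lemma dist_le_plen: "is_walk_path V E a b q \<Longrightarrow> dist V E a b \<le> plen q"
  unfolding dist_def by (rule Least_le) blast

lemma dist_attained:
  "\<exists>q. is_walk_path V E a b q \<Longrightarrow> \<exists>q. is_walk_path V E a b q \<and> plen q = dist V E a b"
  unfolding dist_def by (rule LeastI_ex) blast

lemma dist_self: "a \<in> V \<Longrightarrow> dist V E a a = 0"
  using dist_le_plen[of V E a a "[a]"] by (simp add: is_walk_path_def plen_def)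

lemma dist_eq_0_imp_eq: "\<exists>q. is_walk_path V E a b q \<Longrightarrow> dist V E a b = 0 \<Longrightarrow> b = a"
  using dist_attained[of V E a b]
  by (force simp: is_walk_path_def plen_def is_path_def hd_conv_nth last_conv_nth)

lemma dist_lt_plen_butlast:
  assumes "is_walk_path V E s y q" "w \<in> set (butlast q)"
  shows "dist V E s w < plen q"
proof -
  obtain i where i: "i < length q - 1" "w = q ! i"
    using assms(2) by (auto simp: in_set_conv_nth nth_butlast)
  then have "is_walk_path V E s w (take (Suc i) q)" "plen (take (Suc i) q) = i"
    using is_walk_path_take[OF assms(1), of i] by auto
  then have "dist V E s w \<le> i"
    using dist_le_plen by metis
  with i(1) show ?thesis
    by (simp add: plen_def)
qed

lemma dist_arc_le:
  assumes "E \<subseteq> V \<times> V" "\<exists>q. is_walk_path V E s a q" "(a, b) \<in> E"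
  shows "dist V E s b \<le> dist V E s a + 1"
proof -
  obtain q where q: "is_walk_path V E s a q" "plen q = dist V E s a"
    using dist_attained[OF assms(2)] by blast
  show ?thesis
  proof (cases "b \<in> set q")
    case True
    then obtain i where "i < length q" "q ! i = b"
      by (auto simp: in_set_conv_nth)
    then show ?thesis
      using is_walk_path_take[OF q(1)] dist_le_plen q(2) by (fastforce simp: plen_def)
  next
    case False
    have "a \<in> set q"
      using q(1) by (auto simp: is_walk_path_def is_path_def)
    then have "is_walk_path V E a b [a, b]"
      using assms(1,3) False by (auto simp: is_walk_path_def)
    moreover have "set (butlast q) \<inter> set [a, b] = {}"
      using q(1) False in_set_butlastD
      by (fastforce simp: is_walk_path_def is_path_def
          dest: arg_cong[of _ _ distinct, OF append_butlast_last_id])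
    ultimately have "dist V E s b \<le> plen q + plen [a, b]"
      using is_walk_path_glue[OF q(1)] dist_le_plen by metis
    then show ?thesis
      using q(2) by (simp add: plen_def)
  qed
qed

lemma is_walk_path_via_shortest_path:
  assumes "\<exists>q. is_walk_path V E s y q" "is_walk_path V E y t r"
    and "\<forall>w\<in>set r. dist V E s y \<le> dist V E s w"
  shows "\<exists>Q. is_walk_path V E s t Q \<and> plen Q = dist V E s y + plen r"
proof -
  obtain q where q: "is_walk_path V E s y q" "plen q = dist V E s y"
    using dist_attained[OF assms(1)] by blast
  have "set (butlast q) \<inter> set r = {}"
    using dist_lt_plen_butlast[OF q(1)] q(2) assms(3) by fastforce
  then show ?thesis
    using is_walk_path_glue[OF q(1) assms(2)] q(2) by metis
qed

lemma dist_along_path_attains: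
  assumes "E \<subseteq> V \<times> V" and reach: "\<forall>w\<in>V. \<exists>q. is_walk_path V E s w q"
    and P: "is_walk_path V E s t P" and "n < length P" "d \<le> dist V E s (P ! n)"
  shows "\<exists>i\<le>n. dist V E s (P ! i) = d"
proof (rule nat_attains_intermediate_value[of n "\<lambda>i. dist V E s (P ! i)"])
  have P_facts: "P ! 0 = s" "set P \<subseteq> V" "\<forall>i. Suc i < length P \<longrightarrow> (P ! i, P ! Suc i) \<in> E"
    using P by (auto simp: is_walk_path_def is_path_def hd_conv_nth)
  moreover have "P ! 0 \<in> V"
    using P by (auto simp: is_walk_path_def is_path_def)
  ultimately show "dist V E s (P ! 0) \<le> d"
    using dist_self[of s V E] by simp
  show "\<forall>i<n. dist V E s (P ! Suc i) \<le> dist V E s (P ! i) + 1"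
  proof (intro allI impI)
    fix i assume "i < n"
    then have "(P ! i, P ! Suc i) \<in> E" "P ! i \<in> V"
      using P_facts assms(4) by auto
    then show "dist V E s (P ! Suc i) \<le> dist V E s (P ! i) + 1"
      using dist_arc_le[OF assms(1)] reach by blast
  qed
qed fact

lemma dist_ge_after_sparse_layers:
  assumes "E \<subseteq> V \<times> V" and reach: "\<forall>w\<in>V. \<exists>q. is_walk_path V E s w q"
    and P: "is_walk_path V E s t P"
    and sparse: "\<forall>i. 1 \<le> i \<and> i < p \<longrightarrow> card (layer V E s i \<inter> set P) \<le> 1"
    and j: "j < length P" "p \<le> dist V E s (P ! j)"
  shows "\<forall>w\<in>set (drop (Suc j) P). p \<le> dist V E s w"
proof
  fix w assume "w \<in> set (drop (Suc j) P)"
  then obtain m where m: "m < length P - Suc j" "w = P ! (Suc j + m)"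
    by (auto simp: in_set_conv_nth)
  define r where "r = Suc j + m"
  have r: "j < r" "r < length P" "w = P ! r"
    using m by (auto simp: r_def)
  have P_facts: "P ! 0 = s" "distinct P" "set P \<subseteq> V"
    using P by (auto simp: is_walk_path_def is_path_def hd_conv_nth)
  show "p \<le> dist V E s w"
  proof (rule ccontr)
    assume below: "\<not> p \<le> dist V E s w"
    have "w \<noteq> s"
      using P_facts r by (metis nth_eq_iff_index_eq gr_implies_not0 length_pos_if_in_set nth_mem)
    then have "dist V E s w \<noteq> 0"
      using dist_eq_0_imp_eq reach P_facts(3) r by (metis nth_mem subsetD)
    obtain i where i: "i \<le> j" "dist V E s (P ! i) = dist V E s w"
      using dist_along_path_attains[OF assms(1) reach P j(1), of "dist V E s w"] below j(2) by auto
    have "P ! i \<noteq> w"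
      using P_facts(2) i(1) r j(1) by (simp add: nth_eq_iff_index_eq)
    moreover have "{P ! i, w} \<subseteq> layer V E s (dist V E s w) \<inter> set P"
      using i r j(1) P_facts(3) by (auto simp: layer_def)
    ultimately have "2 \<le> card (layer V E s (dist V E s w) \<inter> set P)"
      using card_mono[of "layer V E s (dist V E s w) \<inter> set P" "{P ! i, w}"] by auto
    moreover have "1 \<le> dist V E s w" "dist V E s w < p"
      using \<open>dist V E s w \<noteq> 0\<close> below by auto
    then have "card (layer V E s (dist V E s w) \<inter> set P) \<le> 1"
      using sparse by blast
    ultimately show False
      by simp
  qed
qed

lemma dist_nth_le:
  assumes "is_walk_path V E s t P" "i < length P"
  shows "dist V E s (P ! i) \<le> i"
  using is_walk_path_take[OF assms] dist_le_plen by metis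

lemma dist_le_via_crossing:
  assumes reach: "\<forall>w\<in>V. \<exists>q. is_walk_path V E s w q"
    and xs: "is_walk_path V E y c xs" and ys: "is_walk_path V E a t ys"
    and meet: "set xs \<inter> set ys \<noteq> {}"
    and above: "\<forall>w\<in>set xs \<union> set ys. dist V E s y \<le> dist V E s w"
  shows "dist V E s t \<le> dist V E s y + plen xs + plen ys"
proof -
  obtain zs where zs: "is_walk_path V E y t zs" "plen zs \<le> plen xs + plen ys"
    "set zs \<subseteq> set xs \<union> set ys"
    using is_walk_path_through_crossing[OF xs ys meet] by blast
  have "y \<in> V"
    using xs by (auto simp: is_walk_path_def is_path_def)
  with reach have "\<exists>q. is_walk_path V E s y q"
    by blast
  moreover have "\<forall>w\<in>set zs. dist V E s y \<le> dist V E s w"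
    using zs(3) above by blast
  ultimately obtain Q where "is_walk_path V E s t Q" "plen Q = dist V E s y + plen zs"
    using is_walk_path_via_shortest_path[OF _ zs(1)] by blast
  then show ?thesis
    using dist_le_plen zs(2) by fastforce
qed

lemma min_path_suffix_shortcut:
  assumes reach: "\<forall>w\<in>V. \<exists>q. is_walk_path V E s w q"
    and P: "is_walk_path V E s t P"
    and P_min: "\<forall>q. is_walk_path V E s t q \<and> plen q \<ge> dist V E s t + k \<longrightarrow> plen P \<le> plen q"
    and i: "i < length P" "dist V E s (P ! i) < i"
    and above: "\<forall>w\<in>set (drop i P). dist V E s (P ! i) \<le> dist V E s w"
  shows "dist V E s (P ! i) + plen (drop i P) < dist V E s t + k"
proof -
  have "P ! i \<in> V"
    using P i(1) by (auto simp: is_walk_path_def is_path_def)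
  with reach have "\<exists>q. is_walk_path V E s (P ! i) q"
    by blast
  from is_walk_path_via_shortest_path[OF this is_walk_path_drop(1)[OF P i(1)] above]
  obtain Q where Q: "is_walk_path V E s t Q" "plen Q = dist V E s (P ! i) + plen (drop i P)"
    by blast
  have "plen Q < plen P"
    using Q(2) is_walk_path_drop(2)[OF P i(1)] i by (simp add: plen_def)
  moreover have "dist V E s t + k \<le> plen Q \<Longrightarrow> plen P \<le> plen Q"
    using P_min Q(1) by blast
  ultimately show ?thesis
    using Q(2) by linarith
qed

theorem lemma3:
  fixes V :: "'a set" and E :: "('a \<times> 'a) set" and s t :: 'a and k :: nat
    and P P' :: "'a list" and p iu iv ix :: nat
  assumes graph: "finite V" "E \<subseteq> V \<times> V"
    and st: "s \<in> V" "t \<in> V"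
    and reach: "\<forall>w\<in>V. \<exists>q. is_walk_path V E s w q"
    and k: "k \<ge> 1"
    and gap: "\<forall>l\<in>{k..2*k-1}. \<not> (\<exists>q. is_walk_path V E s t q \<and> plen q = dist V E s t + l)"
    and P: "is_walk_path V E s t P" "plen P \<ge> dist V E s t + k"
    and P_min: "\<forall>q. is_walk_path V E s t q \<and> plen q \<ge> dist V E s t + k \<longrightarrow> plen P \<le> plen q"
    and p: "p \<ge> 1" "card (layer V E s p \<inter> set P) > 1"
      "\<forall>i. 1 \<le> i \<and> i < p \<longrightarrow> card (layer V E s i \<inter> set P) \<le> 1"
    and uv: "iu < iv" "iv < length P" "P ! iu \<in> layer V E s p" "P ! iv \<in> layer V E s p"
      "\<forall>j<iv. j \<noteq> iu \<longrightarrow> P ! j \<notin> layer V E s p"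
    and x: "iu \<le> ix" "ix \<le> iv" "ix - iu = k"
    and P': "is_walk_path V (induced_arcs E (\<Union>i\<in>{p..}. layer V E s i)) (P ! iu) (P ! ix) P'"
      "set P' \<subseteq> (\<Union>i\<in>{p..}. layer V E s i)" "plen P' \<le> k"
  shows "\<forall>w\<in>set (drop iv P). w \<in> set P' \<longrightarrow>
           w \<in> set (take (min (2*k+1) (length (drop iv P))) (drop iv P))"
proof (intro ballI impI)
  let ?dist = "dist V E s" and ?tail = "drop (iv + 2*k + 1) P"
  fix w assume w: "w \<in> set (drop iv P)" "w \<in> set P'"
  show "w \<in> set (take (min (2*k+1) (length (drop iv P))) (drop iv P))"
  proof (rule ccontr)
    assume not_early: "w \<notin> set (take (min (2*k+1) (length (drop iv P))) (drop iv P))"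
    have m: "min (2*k+1) (length (drop iv P)) = 2*k+1"
      using in_set_drop_beyond_take(1)[OF w(1) not_early] by auto
    have n: "iv + 2*k + 1 < length P" and late: "w \<in> set ?tail"
      using in_set_drop_beyond_take[OF w(1) not_early] by (simp_all add: m)
    have dist_uv: "?dist (P ! iu) = p" "?dist (P ! iv) = p"
      using uv(3,4) by (simp_all add: layer_def)
    have after_u: "\<forall>w\<in>set (drop (Suc iu) P). p \<le> ?dist w"
      using dist_ge_after_sparse_layers[OF graph(2) reach P(1) p(3)] uv(1,2) dist_uv
      by (meson less_trans order_refl)
    have P'_walk: "is_walk_path V E (P ! iu) (P ! ix) P'"
      using P'(1) is_path_mono[of V _ P' E] by (auto simp: is_walk_path_def induced_arcs_def)
    have meet: "set P' \<inter> set ?tail \<noteq> {}"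
      using w(2) late by blast
    have "\<forall>w\<in>set P'. p \<le> ?dist w"
      using P'(2) by (auto simp: layer_def)
    moreover have "set ?tail \<subseteq> set (drop (Suc iu) P)"
      using uv(1) by (intro set_drop_subset_set_drop) simp
    ultimately have above: "\<forall>w\<in>set P' \<union> set ?tail. ?dist (P ! iu) \<le> ?dist w"
      using after_u dist_uv(1) by blast
    have "?dist t \<le> p + plen P' + plen ?tail"
      using dist_le_via_crossing[OF reach P'_walk is_walk_path_drop(1)[OF P(1) n] meet above]
      by (simp add: dist_uv(1))
    moreover have "p + plen (drop iv P) < ?dist t + k"
    proof -
      have "p < iv"
        using dist_nth_le[OF P(1), of iu] uv(1,2) dist_uv(1) by simp
      moreover have "set (drop iv P) \<subseteq> set (drop (Suc iu) P)"
        using uv(1) by (intro set_drop_subset_set_drop) simp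
      ultimately show ?thesis
        using min_path_suffix_shortcut[OF reach P(1) P_min uv(2)] after_u dist_uv(2) by auto
    qed
    ultimately show False
      using P'(3) is_walk_path_drop(2)[OF P(1)] n uv(2) by (simp add: plen_def)
  qed
qed

end
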